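(* Let $G$ be a divisible abelian group (in particular $G$ is nontrivial). Then $Spec_R(G)=\{1,\infty\}$.
   Context: A group $G$ is divisible if for every $x\in G$ and every positive integer $k$ there is $y\in G$ with $y^k=x$ (here the trivial group is excluded, so divisible groups are infinite). For an endomorphism $\varphi$ of $G$, $x,y$ are $\varphi$-conjugated if $x=zy\varphi(z)^{-1}$ for some $z\in G$; $R(\varphi)\in\mathbb{N}\cup\{\infty\}$ is the number of $\varphi$-conjugacy classes (all infinite cardinals identified with $\infty$). $Spec_R(G)=\{R(\varphi)\mid\varphi\in{\rm Aut}(G)\}$. *)

theory Defs
  imports "HOL-Algebra.Group" "HOL-Library.Extended_Nat"
begin

definition divisible_group :: "('a, 'b) monoid_scheme \<Rightarrow> bool" where
  "divisible_group G \<longleftrightarrow> group G \<and> carrier G \<noteq> {\<one>\<^bsub>G\<^esub>} \<and>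
     (\<forall>x \<in> carrier G. \<forall>k::nat. k > 0 \<longrightarrow> (\<exists>y \<in> carrier G. y [^]\<^bsub>G\<^esub> k = x))"

definition twisted_conj :: "('a, 'b) monoid_scheme \<Rightarrow> ('a \<Rightarrow> 'a) \<Rightarrow> ('a \<times> 'a) set" where
  "twisted_conj G \<phi> = {(x, y). x \<in> carrier G \<and> y \<in> carrier G \<and>
     (\<exists>z \<in> carrier G. x = z \<otimes>\<^bsub>G\<^esub> y \<otimes>\<^bsub>G\<^esub> inv\<^bsub>G\<^esub> (\<phi> z))}"

definition reidemeister_number :: "('a, 'b) monoid_scheme \<Rightarrow> ('a \<Rightarrow> 'a) \<Rightarrow> enat" where
  "reidemeister_number G \<phi> =
     (let C = carrier G // twisted_conj G \<phi> in if finite C then enat (card C) else \<infinity>)"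

definition reidemeister_spectrum :: "('a, 'b) monoid_scheme \<Rightarrow> enat set" where
  "reidemeister_spectrum G = {reidemeister_number G \<phi> | \<phi>. \<phi> \<in> iso G G}"

end

theory Submission
  imports Defs "HOL-Algebra.Coset"
begin

text \<open>In an abelian group, \<open>x\<close> and \<open>y\<close> are \<open>\<phi>\<close>-conjugate iff \<open>x\<inverse> y\<close> lies in the
  image of the Lang map \<open>z \<mapsto> z \<phi>(z)\<inverse>\<close>, which is an endomorphism; so the twisted
  conjugacy classes are the cosets of a subgroup \<open>H\<close>, and \<open>R(\<phi>)\<close> is its index. A subgroup of
  finite index \<open>n\<close> contains every \<open>n!\<close>-th power (two of the cosets of \<open>x\<^sup>0, \<dots>, x\<^sup>n\<close>
  coincide), so in a divisible group it is everything and \<open>R(\<phi>) \<in> {1, \<infinity>}\<close>. Both values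
  occur: inversion has Lang map \<open>z \<mapsto> z\<^sup>2\<close>, which is onto, while the identity has trivial
  Lang map and hence infinitely many classes, as \<open>G\<close> is nontrivial.\<close>

definition lang_map :: "('a, 'b) monoid_scheme \<Rightarrow> ('a \<Rightarrow> 'a) \<Rightarrow> 'a \<Rightarrow> 'a" where
  "lang_map G \<phi> z = z \<otimes>\<^bsub>G\<^esub> inv\<^bsub>G\<^esub> (\<phi> z)"

lemma (in group) subgroup_nat_pow_closed:
  assumes "subgroup H G" and "h \<in> H"
  shows "h [^] (n::nat) \<in> H"
  using assms by (induction n) (auto simp: subgroup.one_closed subgroup.m_closed)

lemma (in group) pow_fact_mem_of_finite_index:
  assumes H: "subgroup H G" and fin: "finite (carrier G // (rcong H))" and x: "x \<in> carrier G"
  shows "x [^] (fact (card (carrier G // (rcong H))) :: nat) \<in> H"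
proof -
  define n where "n = card (carrier G // (rcong H))"
  define cls where "cls i = (rcong H) `` {x [^] (i::nat)}" for i
  have "cls ` {0..n} \<subseteq> carrier G // (rcong H)"
    unfolding cls_def using x by (auto intro: quotientI)
  then have "\<not> inj_on cls {0..n}"
    using card_inj_on_le[OF _ _ fin, of cls "{0..n}"] by (auto simp: n_def)
  then obtain i j where ij: "i < j" "j \<le> n" "cls i = cls j"
    unfolding inj_on_def by (metis atLeastAtMost_iff linorder_neqE_nat)
  have "(x [^] i, x [^] j) \<in> rcong H"
    using ij(3) eq_equiv_class_iff[OF subgroup.equiv_rcong[OF H is_group]] x
    by (simp add: cls_def)
  moreover have "x [^] j = x [^] i \<otimes> x [^] (j - i)"
    using ij(1) x by (simp add: nat_pow_mult)
  then have "inv (x [^] i) \<otimes> x [^] j = x [^] (j - i)"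
    using x by (simp add: m_assoc[symmetric])
  ultimately have "x [^] (j - i) \<in> H"
    by (simp add: r_congruent_def)
  moreover have "(j - i) dvd fact n"
    using ij by (intro dvd_fact) auto
  then obtain m where "fact n = (j - i) * m"
    by (rule dvdE)
  then have "x [^] (fact n :: nat) = (x [^] (j - i)) [^] m"
    using x by (simp add: nat_pow_pow)
  ultimately show ?thesis
    using H by (simp add: n_def subgroup_nat_pow_closed)
qed

lemma (in group) eq_mult_iff_inv_mult_eq_inv:
  assumes "x \<in> carrier G" "y \<in> carrier G" "a \<in> carrier G"
  shows "x = y \<otimes> a \<longleftrightarrow> inv x \<otimes> y = inv a"
  using assms by (metis inv_closed inv_solve_left inv_solve_right)

lemma (in group) quotient_rcong_carrier: "carrier G // (rcong (carrier G)) = {carrier G}"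
proof -
  have "(rcong (carrier G)) `` {x} = carrier G" if "x \<in> carrier G" for x
    using that by (auto simp: r_congruent_def)
  then show ?thesis
    by (auto simp: quotient_def)
qed

context comm_group
begin

lemma lang_map_hom:
  assumes "\<phi> \<in> hom G G"
  shows "lang_map G \<phi> \<in> hom G G"
proof (rule homI)
  fix x y assume xy: "x \<in> carrier G" "y \<in> carrier G"
  moreover have "\<phi> x \<in> carrier G" "\<phi> y \<in> carrier G" "\<phi> (x \<otimes> y) = \<phi> x \<otimes> \<phi> y"
    using assms xy by (simp_all add: hom_in_carrier hom_mult)
  ultimately show "lang_map G \<phi> (x \<otimes> y) = lang_map G \<phi> x \<otimes> lang_map G \<phi> y"
    by (simp add: lang_map_def inv_mult m_ac)
qed (use assms in \<open>simp add: lang_map_def hom_in_carrier\<close>)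

lemma lang_map_group_hom:
  assumes "\<phi> \<in> hom G G"
  shows "group_hom G G (lang_map G \<phi>)"
  using lang_map_hom[OF assms] by (simp add: group_hom_def group_hom_axioms_def is_group)

lemma twisted_conj_eq_rcong:
  assumes \<phi>: "\<phi> \<in> hom G G"
  shows "twisted_conj G \<phi> = (rcong (lang_map G \<phi> ` carrier G))"
proof -
  interpret \<psi>: group_hom G G "lang_map G \<phi>"
    by (rule lang_map_group_hom[OF \<phi>])
  have key: "x = z \<otimes> y \<otimes> inv (\<phi> z) \<longleftrightarrow> inv x \<otimes> y = lang_map G \<phi> (inv z)"
    if "x \<in> carrier G" "y \<in> carrier G" "z \<in> carrier G" for x y z
  proof -
    have "\<phi> z \<in> carrier G"
      using that \<phi> by (simp add: hom_in_carrier)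
    then have "z \<otimes> y \<otimes> inv (\<phi> z) = y \<otimes> lang_map G \<phi> z"
      using that by (simp add: lang_map_def m_ac)
    moreover have "lang_map G \<phi> (inv z) = inv (lang_map G \<phi> z)"
      using that by simp
    ultimately show ?thesis
      using that by (simp add: eq_mult_iff_inv_mult_eq_inv)
  qed
  show ?thesis
    unfolding twisted_conj_def r_congruent_def
  proof safe
    fix y z assume yz: "y \<in> carrier G" "z \<in> carrier G"
    then have "inv (z \<otimes> y \<otimes> inv (\<phi> z)) \<otimes> y = lang_map G \<phi> (inv z)"
      using key[of "z \<otimes> y \<otimes> inv (\<phi> z)" y z] \<phi> by (simp add: hom_in_carrier)
    with yz show "inv (z \<otimes> y \<otimes> inv (\<phi> z)) \<otimes> y \<in> lang_map G \<phi> ` carrier G"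
      by (metis image_eqI inv_closed)
  next
    fix x y w assume xyw: "x \<in> carrier G" "y \<in> carrier G" "w \<in> carrier G"
      and "inv x \<otimes> y = lang_map G \<phi> w"
    with key[of x y "inv w"] show "\<exists>z\<in>carrier G. x = z \<otimes> y \<otimes> inv (\<phi> z)"
      by (metis inv_closed inv_inv)
  qed
qed

lemma inv_iso: "(\<lambda>x. inv x) \<in> iso G G"
proof -
  have "(\<lambda>x. inv x) \<in> hom G G"
    by (auto simp: hom_def inv_mult)
  moreover have "bij_betw (\<lambda>x. inv x) (carrier G) (carrier G)"
    by (rule bij_betwI[where g = "\<lambda>x. inv x"]) auto
  ultimately show ?thesis
    by (simp add: iso_def)
qed

lemma reidemeister_number_eq_one:
  assumes "\<phi> \<in> hom G G" and "lang_map G \<phi> ` carrier G = carrier G"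
  shows "reidemeister_number G \<phi> = 1"
  using assms quotient_rcong_carrier
  by (simp add: twisted_conj_eq_rcong reidemeister_number_def one_enat_def)

lemma lang_image_eq_carrier_if_finite:
  assumes div: "divisible_group G" and \<phi>: "\<phi> \<in> hom G G"
    and fin: "finite (carrier G // twisted_conj G \<phi>)"
  shows "lang_map G \<phi> ` carrier G = carrier G"
proof -
  let ?H = "lang_map G \<phi> ` carrier G"
  let ?n = "card (carrier G // (rcong ?H))"
  interpret \<psi>: group_hom G G "lang_map G \<phi>"
    by (rule lang_map_group_hom[OF \<phi>])
  have fin': "finite (carrier G // (rcong ?H))"
    using fin by (simp add: twisted_conj_eq_rcong[OF \<phi>])
  have "x \<in> ?H" if x: "x \<in> carrier G" for x
  proof -
    have "(0::nat) < fact ?n"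
      by simp
    then obtain y where y: "y \<in> carrier G" "y [^] (fact ?n :: nat) = x"
      using div x unfolding divisible_group_def by blast
    then show ?thesis
      using pow_fact_mem_of_finite_index[OF \<psi>.img_is_subgroup fin' y(1)] by simp
  qed
  then show ?thesis
    by auto
qed

lemma reidemeister_number_one_or_infinity:
  assumes "divisible_group G" and "\<phi> \<in> hom G G"
  shows "reidemeister_number G \<phi> \<in> {1, \<infinity>}"
  using assms lang_image_eq_carrier_if_finite reidemeister_number_eq_one
  by (cases "finite (carrier G // twisted_conj G \<phi>)") (auto simp: reidemeister_number_def)

lemma reidemeister_number_inv:
  assumes div: "divisible_group G"
  shows "reidemeister_number G (\<lambda>x. inv x) = 1"
proof (rule reidemeister_number_eq_one)
  show hom: "(\<lambda>x. inv x) \<in> hom G G"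
    using inv_iso by (simp add: iso_def)
  have "x \<in> lang_map G (\<lambda>x. inv x) ` carrier G" if "x \<in> carrier G" for x
  proof -
    obtain y where "y \<in> carrier G" "y [^] (2::nat) = x"
      using div \<open>x \<in> carrier G\<close> unfolding divisible_group_def by (meson zero_less_numeral)
    then show ?thesis
      by (auto simp: lang_map_def numeral_2_eq_2)
  qed
  then show "lang_map G (\<lambda>x. inv x) ` carrier G = carrier G"
    using hom_carrier[OF lang_map_hom[OF hom]] by auto
qed

lemma reidemeister_number_id:
  assumes div: "divisible_group G"
  shows "reidemeister_number G (\<lambda>x. x) = \<infinity>"
proof -
  have hom: "(\<lambda>x. x) \<in> hom G G"
    using iso_set_refl[of G] by (simp add: iso_def)
  have "lang_map G (\<lambda>x. x) ` carrier G = {\<one>}"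
    by (auto simp: lang_map_def)
  moreover have "carrier G \<noteq> {\<one>}"
    using div by (simp add: divisible_group_def)
  ultimately have "infinite (carrier G // twisted_conj G (\<lambda>x. x))"
    using lang_image_eq_carrier_if_finite[OF div hom] by auto
  then show ?thesis
    by (simp add: reidemeister_number_def)
qed

end

theorem proposition3:
  fixes G :: "('a, 'b) monoid_scheme"
  assumes "comm_group G" and "divisible_group G"
  shows "reidemeister_spectrum G = {1, \<infinity>}"
proof -
  interpret comm_group G by (rule assms(1))
  have "reidemeister_spectrum G \<subseteq> {1, \<infinity>}"
    using reidemeister_number_one_or_infinity[OF assms(2)]
    by (auto simp: reidemeister_spectrum_def iso_def)
  moreover have "1 \<in> reidemeister_spectrum G"
    using reidemeister_number_inv[OF assms(2)] inv_iso
    unfolding reidemeister_spectrum_def by force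
  moreover have "\<infinity> \<in> reidemeister_spectrum G"
    using reidemeister_number_id[OF assms(2)] iso_set_refl[of G]
    unfolding reidemeister_spectrum_def by force
  ultimately show ?thesis
    by blast
qed

end
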